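(* Let $I\subset\mathbb{R}$ be an open interval and let $x+iy:I\to\mathbb{C}$ be a smooth immersion. Give $\mathbb{C}^2$ its flat metric. (a) Let $\lambda\neq0,1$ be real. The Levi-flat hypersurface $\{(e^{w+x(r)+iy(r)},\ e^{\lambda w}): w\in\mathbb{C},\ r\in I\}\subset\mathbb{C}^2$ is minimal if and only if $y$ is constant on $I$. (b) Let $\lambda\neq0$ be real. The Levi-flat hypersurface $\{(w+x(r)+iy(r),\ e^{\lambda w}): w\in\mathbb{C},\ r\in I\}\subset\mathbb{C}^2$ is minimal if and only if $y$ is constant on $I$. In particular, $\{(z_1,z_2)\in\mathbb{C}^2:\operatorname{Im}(z_2e^{-z_1})=0\}$ is a closed embedded minimal Levi-flat hypersurface.
   Context: A real hypersurface is minimal if its mean curvature vanishes. *)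

theory Defs
  imports "HOL-Analysis.Analysis"
begin

definition smooth_on :: "real set \<Rightarrow> (real \<Rightarrow> real) \<Rightarrow> bool" where
  "smooth_on I f \<longleftrightarrow> (\<forall>n. \<forall>t\<in>I. ((deriv ^^ n) f) differentiable (at t))"

text \<open>Partial derivative of a map of three real parameters (coordinates of real^3)
  into C^2 = complex \<times> complex, which carries its flat (Euclidean) metric.\<close>
definition partial :: "(real^3 \<Rightarrow> 'b::real_normed_vector) \<Rightarrow> 3 \<Rightarrow> real^3 \<Rightarrow> 'b" where
  "partial F i p = frechet_derivative F (at p) (axis i 1)"

definition metric3 :: "(real^3 \<Rightarrow> complex \<times> complex) \<Rightarrow> real^3 \<Rightarrow> real^3^3" where
  "metric3 F p = (\<chi> i j. inner (partial F i p) (partial F j p))"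

text \<open>The vector sum g^ij F_ij; its normal component is the mean curvature vector.\<close>
definition laplace_vec :: "(real^3 \<Rightarrow> complex \<times> complex) \<Rightarrow> real^3 \<Rightarrow> complex \<times> complex" where
  "laplace_vec F p =
     (\<Sum>i\<in>UNIV. \<Sum>j\<in>UNIV. (matrix_inv (metric3 F p) $ i $ j) *\<^sub>R partial (partial F j) i p)"

definition immersion3 :: "(real^3) set \<Rightarrow> (real^3 \<Rightarrow> complex \<times> complex) \<Rightarrow> bool" where
  "immersion3 U F \<longleftrightarrow> (\<forall>p\<in>U. F differentiable (at p) \<and> inj (frechet_derivative F (at p)))"

definition minimal_hypersurface :: "(real^3) set \<Rightarrow> (real^3 \<Rightarrow> complex \<times> complex) \<Rightarrow> bool" where
  "minimal_hypersurface U F \<longleftrightarrow>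
     (\<forall>p\<in>U. \<forall>\<nu>. (\<forall>i. inner \<nu> (partial F i p) = 0) \<longrightarrow> inner \<nu> (laplace_vec F p) = 0)"

text \<open>Parameter w = u + iv with u = p$1, v = p$2, and r = p$3.\<close>
definition wpar :: "real^3 \<Rightarrow> complex" where
  "wpar p = Complex (p$1) (p$2)"

definition hyp_a :: "real \<Rightarrow> (real \<Rightarrow> real) \<Rightarrow> (real \<Rightarrow> real) \<Rightarrow> real^3 \<Rightarrow> complex \<times> complex" where
  "hyp_a lam x y p = (exp (wpar p + Complex (x (p$3)) (y (p$3))), exp (of_real lam * wpar p))"

definition hyp_b :: "real \<Rightarrow> (real \<Rightarrow> real) \<Rightarrow> (real \<Rightarrow> real) \<Rightarrow> real^3 \<Rightarrow> complex \<times> complex" where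
  "hyp_b lam x y p = (wpar p + Complex (x (p$3)) (y (p$3)), exp (of_real lam * wpar p))"

text \<open>Parametrization of {Im(z2 e^(-z1)) = 0}: (w, r) \<mapsto> (w, r e^w).\<close>
definition hyp_c :: "real^3 \<Rightarrow> complex \<times> complex" where
  "hyp_c p = (wpar p, of_real (p$3) * exp (wpar p))"

end

theory Submission
  imports Defs
begin

(*
  Each hypersurface is parametrized as F(w, r) with F holomorphic in w = u + iv, so that
  dF = A dw + B dr with A, B in C^2.  In the frame (A, iA, B) the induced metric only involves
  |A|^2, |B|^2 and the Hermitian product <A, B>; by Lagrange's identity its determinant is
  |A|^2 |A x B|^2, where A x B = A_1 B_2 - A_2 B_1, and the normal line is spanned by
  i (A x B) (-conj A_2, conj A_1).  Hence minimality is the single real equation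
  Im ((A x B) conj (A x M)) = 0 for an explicit combination M of the second derivatives of F.

  Parts (a) and (b) are the cases g = exp and g = id of the family (g(w + x + iy), exp(lam w))
  with g'(z) = exp(kappa z), kappa = 1 resp. 0.  Writing P = |g'|^2 and Q = |lam exp(lam w)|^2,
  the equation becomes m (lam P^2 - kappa Q^2) + (P + Q)^2 k = 0 with m = (x'^2 + y'^2) y' and
  k = y' x'' - x' y''.  As Re w varies, t = P/Q runs through infinitely many values because
  lam <> kappa, so the quadratic (lam m + k) t^2 + 2 k t + (k - kappa m) in t vanishes
  identically; this forces m = 0, i.e. y' = 0.  For (w, r e^w) the equation holds identically.
*)

section \<open>Hermitian algebra on C^2\<close>

definition cscale :: "complex \<Rightarrow> complex \<times> complex \<Rightarrow> complex \<times> complex" where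
  "cscale c z = (c * fst z, c * snd z)"

definition herm :: "complex \<times> complex \<Rightarrow> complex \<times> complex \<Rightarrow> complex" where
  "herm X Y = fst X * cnj (fst Y) + snd X * cnj (snd Y)"

definition cdet :: "complex \<times> complex \<Rightarrow> complex \<times> complex \<Rightarrow> complex" where
  "cdet X Y = fst X * snd Y - snd X * fst Y"

lemma inner_eq_Re_herm: "inner X Y = Re (herm X Y)"
  by (cases X; cases Y) (simp add: herm_def inner_prod_def inner_complex_def)

lemma herm_self: "herm X X = of_real ((norm X)^2)"
  by (cases X) (simp add: herm_def norm_Pair complex_mult_cnj cmod_power2)

lemma norm_cscale: "norm (cscale c X) = cmod c * norm X"
  by (cases X) (simp add: cscale_def norm_Pair norm_mult power_mult_distrib real_sqrt_mult
      flip: distrib_left)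

lemma herm_lagrange: "(norm A)^2 * (norm B)^2 - (cmod (herm A B))^2 = (cmod (cdet A B))^2"
  by (cases A; cases B)
    (simp add: herm_def cdet_def norm_Pair cmod_power2, simp add: algebra_simps power2_eq_square)

lemma cdet_self [simp]: "cdet A A = 0"
  by (simp add: cdet_def)

lemma cdet_zero_left [simp]: "cdet 0 B = 0"
  by (simp add: cdet_def)

lemma herm_cscale_right: "herm X (cscale c Y) = cnj c * herm X Y"
  by (simp add: herm_def cscale_def algebra_simps)

lemma herm_cscale_left: "herm (cscale c X) Y = c * herm X Y"
  by (simp add: herm_def cscale_def algebra_simps)

lemma herm_commute: "herm Y X = cnj (herm X Y)"
  by (simp add: herm_def)

lemma herm_normal: "herm (cscale c (- cnj (snd A), cnj (fst A))) X = c * cnj (cdet A X)"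
  by (simp add: herm_def cdet_def cscale_def algebra_simps)

lemma cdet_herm_expansion:
  "cdet A B * cnj (herm v M) - cdet A M * cnj (herm v B) = cdet M B * cnj (herm v A)"
  by (simp add: herm_def cdet_def algebra_simps)

lemma orthogonal_to_normals_iff:
  assumes nz: "cdet A B \<noteq> 0"
  shows "(\<forall>v. inner v A = 0 \<longrightarrow> inner v (cscale \<i> A) = 0 \<longrightarrow> inner v B = 0 \<longrightarrow> inner v M = 0)
    \<longleftrightarrow> Im (cdet A B * cnj (cdet A M)) = 0"
proof
  assume H: "\<forall>v. inner v A = 0 \<longrightarrow> inner v (cscale \<i> A) = 0 \<longrightarrow> inner v B = 0 \<longrightarrow> inner v M = 0"
  \<comment> \<open>(- cnj A_2, cnj A_1) spans the complex line orthogonal to A; the factor i (A x B) makes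
    the real normal vector orthogonal to B as well.\<close>
  define \<nu> where "\<nu> = cscale (\<i> * cdet A B) (- cnj (snd A), cnj (fst A))"
  have "inner \<nu> A = 0" "inner \<nu> (cscale \<i> A) = 0" "inner \<nu> B = 0"
    by (simp_all add: \<nu>_def inner_eq_Re_herm herm_normal herm_cscale_right complex_norm_square[symmetric])
  then have "inner \<nu> M = 0" using H by blast
  then have "Re (\<i> * cdet A B * cnj (cdet A M)) = 0"
    by (simp add: \<nu>_def inner_eq_Re_herm herm_normal)
  then show "Im (cdet A B * cnj (cdet A M)) = 0" by simp
next
  assume H: "Im (cdet A B * cnj (cdet A M)) = 0"
  show "\<forall>v. inner v A = 0 \<longrightarrow> inner v (cscale \<i> A) = 0 \<longrightarrow> inner v B = 0 \<longrightarrow> inner v M = 0"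
  proof (intro allI impI)
    fix v assume "inner v A = 0" "inner v (cscale \<i> A) = 0" and vB: "inner v B = 0"
    then have "herm v A = 0"
      by (simp add: inner_eq_Re_herm herm_cscale_right complex_eq_iff)
    then have k: "cdet A B * cnj (herm v M) = cdet A M * cnj (herm v B)"
      using cdet_herm_expansion[of A B v M] by simp
    define r where "r = (cmod (cdet A B))^2"
    have "of_real r * cnj (herm v M) = cnj (cdet A B) * (cdet A B * cnj (herm v M))"
      unfolding r_def complex_norm_square by (simp only: mult_ac)
    also have "\<dots> = cnj (cdet A B * cnj (cdet A M) * herm v B)"
      unfolding k by (simp add: mult_ac)
    finally have "Re (of_real r * cnj (herm v M)) = Re (cnj (cdet A B * cnj (cdet A M) * herm v B))"
      by (rule arg_cong)
    then have "r * Re (herm v M) = Re (cdet A B * cnj (cdet A M) * herm v B)"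
      by (simp add: algebra_simps)
    also have "\<dots> = 0"
      using H vB by (simp add: inner_eq_Re_herm)
    finally show "inner v M = 0"
      using nz by (simp add: inner_eq_Re_herm r_def)
  qed
qed

section \<open>Levi-flat parametrizations\<close>

text \<open>The differential A dw + B dr of a map that is holomorphic in w = u + iv.\<close>

definition levi_diff :: "complex \<times> complex \<Rightarrow> complex \<times> complex \<Rightarrow> real^3 \<Rightarrow> complex \<times> complex" where
  "levi_diff A B h = cscale (wpar h) A + h$3 *\<^sub>R B"

lemma cscale_levi_diff: "cscale c (levi_diff A B h) = levi_diff (cscale c A) (cscale c B) h"
  by (simp add: levi_diff_def cscale_def scaleR_conv_of_real algebra_simps)

lemma bounded_linear_cscale: "bounded_linear (cscale c)"
  unfolding cscale_def
  by (intro bounded_linear_Pair bounded_linear_compose[OF bounded_linear_mult_right]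
      bounded_linear_fst bounded_linear_snd)

lemmas has_derivative_cscale = bounded_linear.has_derivative[OF bounded_linear_cscale]

lemma partial_levi_diff:
  assumes "(F has_derivative levi_diff A B) (at p)"
  shows "partial F 1 p = A" "partial F 2 p = cscale \<i> A" "partial F 3 p = B"
  using frechet_derivative_at[OF assms, symmetric]
  by (simp_all add: partial_def levi_diff_def axis_def wpar_def cscale_def Complex_eq zero_prod_def)

lemma has_derivative_partial_levi:
  assumes "open U" "p \<in> U"
    and F: "\<And>q. q \<in> U \<Longrightarrow> (F has_derivative levi_diff (A q) (B q)) (at q)"
    and A: "(A has_derivative levi_diff C D) (at p)"
    and B: "(B has_derivative levi_diff D E) (at p)"
  shows "(partial F 1 has_derivative levi_diff C D) (at p)"
    "(partial F 2 has_derivative levi_diff (cscale \<i> C) (cscale \<i> D)) (at p)"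
    "(partial F 3 has_derivative levi_diff D E) (at p)"
proof -
  note P = partial_levi_diff[OF F]
  show "(partial F 1 has_derivative levi_diff C D) (at p)"
    by (rule has_derivative_transform_within_open[OF A \<open>open U\<close> \<open>p \<in> U\<close>]) (simp add: P)
  have "((\<lambda>q. cscale \<i> (A q)) has_derivative levi_diff (cscale \<i> C) (cscale \<i> D)) (at p)"
    using has_derivative_cscale[OF A] by (simp add: cscale_levi_diff)
  then show "(partial F 2 has_derivative levi_diff (cscale \<i> C) (cscale \<i> D)) (at p)"
    by (rule has_derivative_transform_within_open[OF _ \<open>open U\<close> \<open>p \<in> U\<close>]) (simp add: P)
  show "(partial F 3 has_derivative levi_diff D E) (at p)"
    by (rule has_derivative_transform_within_open[OF B \<open>open U\<close> \<open>p \<in> U\<close>]) (simp add: P)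
qed

lemma metric3_levi:
  assumes "(F has_derivative levi_diff A B) (at p)"
  shows "metric3 F p = vector [vector [(norm A)^2, 0, Re (herm A B)],
                               vector [0, (norm A)^2, - Im (herm A B)],
                               vector [Re (herm A B), - Im (herm A B), (norm B)^2]]"
  by (simp add: metric3_def vec_eq_iff forall_3 partial_levi_diff[OF assms] inner_eq_Re_herm
      herm_cscale_left herm_cscale_right herm_commute[of A] herm_self norm_cscale)

lemma matrix_inv_eqI:
  fixes A B :: "'a::field^'n^'n"
  assumes "A ** B = mat 1"
  shows "matrix_inv A = B"
proof -
  have "A ** matrix_inv A = mat 1 \<and> matrix_inv A ** A = mat 1"
    unfolding matrix_inv_def
    by (rule someI[of _ B]) (use assms matrix_left_right_inverse in blast)
  then have "matrix_inv A = (matrix_inv A ** A) ** B"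
    by (metis assms matrix_mul_assoc matrix_mul_rid)
  with \<open>_ \<and> _\<close> show ?thesis by (simp add: matrix_mul_lid)
qed

lemma matrix_inv_levi_gram:
  fixes a b s1 s2 \<delta> :: real
  assumes "a \<noteq> 0" "\<delta> \<noteq> 0" "\<delta> = a * b - s1^2 - s2^2"
  shows "matrix_inv (vector [vector [a, 0, s1], vector [0, a, - s2], vector [s1, - s2, b]] :: real^3^3)
    = (1 / (a * \<delta>)) *\<^sub>R vector [vector [a * b - s2^2, - s1 * s2, - a * s1],
                                 vector [- s1 * s2, a * b - s1^2, a * s2],
                                 vector [- a * s1, a * s2, a^2]]"
    (is "matrix_inv ?G = ?H")
proof (rule matrix_inv_eqI)
  have b: "b = (\<delta> + s1^2 + s2^2) / a"
    using assms by (simp add: field_simps)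
  show "?G ** ?H = mat 1"
    unfolding b using assms(1,2)
    by (simp add: matrix_matrix_mult_def vec_eq_iff forall_3 sum_3 mat_def field_simps power2_eq_square)
qed

definition levi_laplacian ::
  "complex \<times> complex \<Rightarrow> complex \<times> complex \<Rightarrow> complex \<times> complex \<Rightarrow> complex \<times> complex \<Rightarrow> complex \<times> complex
    \<Rightarrow> complex \<times> complex" where
  "levi_laplacian A B C D E =
     cscale ((cnj (herm A B))^2) C - (2 * (norm A)^2) *\<^sub>R cscale (cnj (herm A B)) D + ((norm A)^2)^2 *\<^sub>R E"

lemma laplace_vec_levi:
  assumes U: "open U" "p \<in> U"
    and F: "\<And>q. q \<in> U \<Longrightarrow> (F has_derivative levi_diff (A q) (B q)) (at q)"
    and A: "(A has_derivative levi_diff C D) (at p)"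
    and B: "(B has_derivative levi_diff D E) (at p)"
    and nz: "cdet (A p) (B p) \<noteq> 0"
  shows "laplace_vec F p
    = (1 / ((norm (A p))^2 * (cmod (cdet (A p) (B p)))^2)) *\<^sub>R levi_laplacian (A p) (B p) C D E"
proof -
  define a where "a = (norm (A p))^2"
  define s where "s = herm (A p) (B p)"
  define \<delta> where "\<delta> = a * (norm (B p))^2 - (Re s)^2 - (Im s)^2"
  have \<delta>: "\<delta> = (cmod (cdet (A p) (B p)))^2"
    using herm_lagrange[of "A p" "B p"] by (simp add: \<delta>_def a_def s_def cmod_power2)
  have "a \<noteq> 0" "\<delta> \<noteq> 0"
    using nz by (auto simp: a_def \<delta>)
  note second_partials = partial_levi_diff[OF has_derivative_partial_levi(1)[OF U F A B]]
    partial_levi_diff[OF has_derivative_partial_levi(2)[OF U F A B]]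
    partial_levi_diff[OF has_derivative_partial_levi(3)[OF U F A B]]
  have Ginv: "matrix_inv (metric3 F p) = (1 / (a * \<delta>)) *\<^sub>R vector [vector [a * (norm (B p))^2 - (Im s)^2, - Re s * Im s, - a * Re s],
                                 vector [- Re s * Im s, a * (norm (B p))^2 - (Re s)^2, a * Im s],
                                 vector [- a * Re s, a * Im s, a^2]]"
    unfolding metric3_levi[OF F[OF U(2)]] a_def[symmetric] s_def[symmetric]
    by (rule matrix_inv_levi_gram[OF \<open>a \<noteq> 0\<close> \<open>\<delta> \<noteq> 0\<close> \<delta>_def])
  have cs: "cnj s = of_real (Re s) - \<i> * of_real (Im s)"
    by (simp add: complex_eq_iff)
  show ?thesis
    unfolding \<delta>[symmetric] levi_laplacian_def a_def[symmetric] s_def[symmetric] cs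
    using \<open>a \<noteq> 0\<close> \<open>\<delta> \<noteq> 0\<close>
    by (simp only: laplace_vec_def Ginv sum_3 second_partials vector_scaleR_component vector_3)
      (simp add: prod_eq_iff cscale_def complex_eq_iff field_simps power2_eq_square)
qed

lemma minimal_hypersurface_levi_iff:
  assumes U: "open U"
    and F: "\<And>q. q \<in> U \<Longrightarrow> (F has_derivative levi_diff (A q) (B q)) (at q)"
    and A: "\<And>q. q \<in> U \<Longrightarrow> (A has_derivative levi_diff (C q) (D q)) (at q)"
    and B: "\<And>q. q \<in> U \<Longrightarrow> (B has_derivative levi_diff (D q) (E q)) (at q)"
    and nz: "\<And>q. q \<in> U \<Longrightarrow> cdet (A q) (B q) \<noteq> 0"
  shows "minimal_hypersurface U F \<longleftrightarrow>
    (\<forall>q\<in>U. Im (cdet (A q) (B q) * cnj (cdet (A q) (levi_laplacian (A q) (B q) (C q) (D q) (E q)))) = 0)"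
  unfolding minimal_hypersurface_def
proof (intro ball_cong refl)
  fix q assume q: "q \<in> U"
  have "laplace_vec F q
      = (1 / ((norm (A q))^2 * (cmod (cdet (A q) (B q)))^2)) *\<^sub>R levi_laplacian (A q) (B q) (C q) (D q) (E q)"
    by (rule laplace_vec_levi[OF U q F A[OF q] B[OF q] nz[OF q]])
  moreover have "A q \<noteq> 0" using nz[OF q] by auto
  ultimately have "(\<forall>\<nu>. (\<forall>i. inner \<nu> (partial F i q) = 0) \<longrightarrow> inner \<nu> (laplace_vec F q) = 0) \<longleftrightarrow>
      (\<forall>\<nu>. inner \<nu> (A q) = 0 \<longrightarrow> inner \<nu> (cscale \<i> (A q)) = 0 \<longrightarrow> inner \<nu> (B q) = 0 \<longrightarrow>
        inner \<nu> (levi_laplacian (A q) (B q) (C q) (D q) (E q)) = 0)"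
    using nz[OF q] by (auto simp add: forall_3 partial_levi_diff[OF F[OF q]])
  also have "\<dots> \<longleftrightarrow> Im (cdet (A q) (B q) * cnj (cdet (A q) (levi_laplacian (A q) (B q) (C q) (D q) (E q)))) = 0"
    by (rule orthogonal_to_normals_iff[OF nz[OF q]])
  finally show "(\<forall>\<nu>. (\<forall>i. inner \<nu> (partial F i q) = 0) \<longrightarrow> inner \<nu> (laplace_vec F q) = 0) \<longleftrightarrow>
      Im (cdet (A q) (B q) * cnj (cdet (A q) (levi_laplacian (A q) (B q) (C q) (D q) (E q)))) = 0" .
qed

lemma immersion_levi:
  assumes F: "(F has_derivative levi_diff A B) (at q)" and nz: "cdet A B \<noteq> 0"
  shows "F differentiable (at q) \<and> inj (frechet_derivative F (at q))"
proof
  show "F differentiable (at q)" using F unfolding differentiable_def by blast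
  have dF: "frechet_derivative F (at q) = levi_diff A B"
    using frechet_derivative_at[OF F] by simp
  show "inj (frechet_derivative F (at q))"
    unfolding dF linear_injective_0[OF has_derivative_linear[OF F]]
  proof (intro allI impI)
    fix h :: "real^3" assume h: "levi_diff A B h = 0"
    have "cdet A (levi_diff A B h) = of_real (h$3) * cdet A B"
      by (simp add: levi_diff_def cdet_def cscale_def scaleR_conv_of_real algebra_simps)
    then have "of_real (h$3) * cdet A B = 0"
      by (simp add: h cdet_def)
    then have h3: "h$3 = 0" using nz by simp
    moreover have "A \<noteq> 0" using nz by auto
    ultimately have "wpar h = 0"
      using h by (cases A) (auto simp: levi_diff_def cscale_def zero_prod_def)
    with h3 show "h = 0"
      by (simp add: vec_eq_iff forall_3 wpar_def complex_eq_iff)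
  qed
qed

section \<open>The families (g(w + x + iy), exp(lam w)) with g'(z) = exp(kappa z)\<close>

lemma has_derivative_wpar: "(wpar has_derivative wpar) F"
proof -
  have "linear wpar"
    by (rule linearI) (simp_all add: wpar_def complex_eq_iff)
  then show ?thesis
    by (simp add: linear_conv_bounded_linear bounded_linear_imp_has_derivative)
qed

lemma has_derivative_compose_field:
  assumes "(f has_derivative f') (at q)" "(g has_field_derivative d) (at (f q))"
  shows "((\<lambda>q. g (f q)) has_derivative (\<lambda>h. d * f' h)) (at q)"
  using has_derivative_compose[OF assms(1) assms(2)[unfolded has_field_derivative_def]] .

lemma has_derivative_compose_vec3:
  assumes "(c has_vector_derivative c') (at (q$3))"
  shows "((\<lambda>q::real^3. c (q$3)) has_derivative (\<lambda>h. h$3 *\<^sub>R c')) (at q)"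
  using has_derivative_compose[OF bounded_linear_imp_has_derivative[OF bounded_linear_vec_nth]
      assms[unfolded has_vector_derivative_def]] .

lemma has_vector_derivative_Complex:
  "(x has_real_derivative a) (at r) \<Longrightarrow> (y has_real_derivative b) (at r) \<Longrightarrow>
    ((\<lambda>r. Complex (x r) (y r)) has_vector_derivative Complex a b) (at r)"
  by (simp add: has_vector_derivative_complex_iff)

lemma levi_family_has_derivative:
  fixes \<kappa> lam :: real and g :: "complex \<Rightarrow> complex" and c c' c'' :: "real \<Rightarrow> complex"
  assumes g: "\<And>\<zeta>. (g has_field_derivative exp (of_real \<kappa> * \<zeta>)) (at \<zeta>)"
    and c: "(c has_vector_derivative c' (q$3)) (at (q$3))"
    and c': "(c' has_vector_derivative c'' (q$3)) (at (q$3))"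
    and f_def: "f = (\<lambda>q. exp (of_real \<kappa> * (wpar q + c (q$3))))"
    and e_def: "e = (\<lambda>q. of_real lam * exp (of_real lam * wpar q))"
  shows "((\<lambda>q. (g (wpar q + c (q$3)), exp (of_real lam * wpar q))) has_derivative
      levi_diff (f q, e q) (f q * c' (q$3), 0)) (at q)"
    "((\<lambda>q. (f q, e q)) has_derivative
      levi_diff (of_real \<kappa> * f q, of_real lam * e q) (of_real \<kappa> * f q * c' (q$3), 0)) (at q)"
    "((\<lambda>q. (f q * c' (q$3), 0)) has_derivative
      levi_diff (of_real \<kappa> * f q * c' (q$3), 0) (of_real \<kappa> * f q * (c' (q$3))^2 + f q * c'' (q$3), 0)) (at q)"
proof -
  have \<zeta>: "((\<lambda>q. wpar q + c (q$3)) has_derivative (\<lambda>h. wpar h + h$3 *\<^sub>R c' (q$3))) (at q)"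
    by (intro has_derivative_add has_derivative_wpar has_derivative_compose_vec3 c)
  have w: "((\<lambda>q. of_real lam * wpar q) has_derivative (\<lambda>h. of_real lam * wpar h)) (at q)"
    by (intro has_derivative_mult_right has_derivative_wpar)
  have df: "(f has_derivative (\<lambda>h. f q * (of_real \<kappa> * (wpar h + h$3 *\<^sub>R c' (q$3))))) (at q)"
    unfolding f_def
    by (rule has_derivative_compose_field[OF has_derivative_mult_right[OF \<zeta>]])
      (simp add: DERIV_exp mult.commute)
  have de: "(e has_derivative (\<lambda>h. of_real lam * e q * wpar h)) (at q)"
    unfolding e_def
    by (rule has_derivative_eq_rhs[OF has_derivative_mult_right[OF has_derivative_compose_field[OF w DERIV_exp]]])
      (simp add: fun_eq_iff algebra_simps)
  have dc': "((\<lambda>q. c' (q$3)) has_derivative (\<lambda>h. h$3 *\<^sub>R c'' (q$3))) (at q)"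
    by (rule has_derivative_compose_vec3[OF c'])
  show "((\<lambda>q. (g (wpar q + c (q$3)), exp (of_real lam * wpar q))) has_derivative
      levi_diff (f q, e q) (f q * c' (q$3), 0)) (at q)"
    by (rule has_derivative_eq_rhs[OF has_derivative_Pair[OF has_derivative_compose_field[OF \<zeta> g]
          has_derivative_compose_field[OF w DERIV_exp]]])
      (simp add: levi_diff_def fun_eq_iff cscale_def f_def e_def scaleR_conv_of_real algebra_simps)
  show "((\<lambda>q. (f q, e q)) has_derivative
      levi_diff (of_real \<kappa> * f q, of_real lam * e q) (of_real \<kappa> * f q * c' (q$3), 0)) (at q)"
    by (rule has_derivative_eq_rhs[OF has_derivative_Pair[OF df de]])
      (simp add: levi_diff_def fun_eq_iff cscale_def scaleR_conv_of_real algebra_simps)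
  show "((\<lambda>q. (f q * c' (q$3), 0)) has_derivative
      levi_diff (of_real \<kappa> * f q * c' (q$3), 0) (of_real \<kappa> * f q * (c' (q$3))^2 + f q * c'' (q$3), 0)) (at q)"
    by (rule has_derivative_eq_rhs[OF has_derivative_Pair[OF has_derivative_mult[OF df dc'] has_derivative_const]])
      (simp add: levi_diff_def fun_eq_iff cscale_def scaleR_conv_of_real algebra_simps power2_eq_square)
qed

lemma Im_cdet_levi_family:
  fixes f e b \<gamma> :: complex and \<kappa> lam :: real
  defines "P \<equiv> (cmod f)^2" and "Q \<equiv> (cmod e)^2"
  shows "Im (cdet (f, e) (f * b, 0) * cnj (cdet (f, e)
      (levi_laplacian (f, e) (f * b, 0) (of_real \<kappa> * f, of_real lam * e) (of_real \<kappa> * f * b, 0)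
        (of_real \<kappa> * f * b^2 + f * \<gamma>, 0))))
    = P * Q * ((cmod b)^2 * Im b * (lam * P^2 - \<kappa> * Q^2) + (P + Q)^2 * Im (b * cnj \<gamma>))"
proof -
  have a: "(norm (f, e))^2 = P + Q"
    by (simp add: norm_Pair P_def Q_def)
  have ff: "f * cnj f = of_real P" and ee: "e * cnj e = of_real Q"
    by (simp_all only: P_def Q_def complex_norm_square)
  have s: "cnj (herm (f, e) (f * b, 0)) = of_real P * b"
    by (simp add: herm_def ff mult_ac)
  have M: "cdet (f, e) (levi_laplacian (f, e) (f * b, 0) (of_real \<kappa> * f, of_real lam * e)
        (of_real \<kappa> * f * b, 0) (of_real \<kappa> * f * b^2 + f * \<gamma>, 0))
      = e * f * (of_real (lam * P^2 - \<kappa> * Q^2) * b^2 - of_real ((P + Q)^2) * \<gamma>)"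
    unfolding levi_laplacian_def a s
    by (simp add: cdet_def cscale_def scaleR_conv_of_real algebra_simps power2_eq_square)
  have prod: "cdet (f, e) (f * b, 0) * cnj (e * f * X) = - of_real (P * Q) * (b * cnj X)" for X
  proof -
    have "cdet (f, e) (f * b, 0) * cnj (e * f * X) = - ((f * cnj f) * (e * cnj e)) * (b * cnj X)"
      by (simp add: cdet_def mult_ac)
    then show ?thesis by (simp only: ff ee of_real_mult)
  qed
  have conj: "b * cnj (of_real R * b^2 - of_real c * \<gamma>) = of_real (R * (cmod b)^2) * cnj b - of_real c * (b * cnj \<gamma>)"
    for R c
  proof -
    have "b * cnj (of_real R * b^2 - of_real c * \<gamma>) = of_real R * (b * cnj b) * cnj b - of_real c * (b * cnj \<gamma>)"
      by (simp add: power2_eq_square algebra_simps)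
    also have "\<dots> = of_real (R * (cmod b)^2) * cnj b - of_real c * (b * cnj \<gamma>)"
      by (simp only: of_real_mult complex_norm_square)
    finally show ?thesis .
  qed
  show ?thesis
    unfolding M prod conj by (simp add: algebra_simps)
qed

lemma minimal_levi_family_criterion:
  fixes \<kappa> lam :: real and g :: "complex \<Rightarrow> complex" and c c' c'' :: "real \<Rightarrow> complex"
  assumes U: "open U" and lam: "lam \<noteq> 0"
    and g: "\<And>\<zeta>. (g has_field_derivative exp (of_real \<kappa> * \<zeta>)) (at \<zeta>)"
    and c: "\<And>q. q \<in> U \<Longrightarrow> (c has_vector_derivative c' (q$3)) (at (q$3))"
    and c': "\<And>q. q \<in> U \<Longrightarrow> (c' has_vector_derivative c'' (q$3)) (at (q$3))"
    and nz: "\<And>q. q \<in> U \<Longrightarrow> c' (q$3) \<noteq> 0"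
  shows "minimal_hypersurface U (\<lambda>q. (g (wpar q + c (q$3)), exp (of_real lam * wpar q))) \<longleftrightarrow>
    (\<forall>q\<in>U. let P = exp (2 * \<kappa> * (q$1 + Re (c (q$3)))); Q = lam^2 * exp (2 * lam * q$1); b = c' (q$3)
       in (cmod b)^2 * Im b * (lam * P^2 - \<kappa> * Q^2) + (P + Q)^2 * Im (b * cnj (c'' (q$3))) = 0)"
    (is "_ \<longleftrightarrow> ?rhs")
proof -
  define f where "f = (\<lambda>q. exp (of_real \<kappa> * (wpar q + c (q$3))))"
  define e where "e = (\<lambda>q. of_real lam * exp (of_real lam * wpar q))"
  have "minimal_hypersurface U (\<lambda>q. (g (wpar q + c (q$3)), exp (of_real lam * wpar q))) \<longleftrightarrow>
    (\<forall>q\<in>U. Im (cdet (f q, e q) (f q * c' (q$3), 0) * cnj (cdet (f q, e q)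
      (levi_laplacian (f q, e q) (f q * c' (q$3), 0) (of_real \<kappa> * f q, of_real lam * e q)
        (of_real \<kappa> * f q * c' (q$3), 0) (of_real \<kappa> * f q * (c' (q$3))^2 + f q * c'' (q$3), 0)))) = 0)"
    using lam nz
    by (intro minimal_hypersurface_levi_iff[OF U] levi_family_has_derivative[where c''=c'', OF g _ _ f_def e_def] c c')
      (simp_all add: cdet_def f_def e_def)
  also have "\<dots> \<longleftrightarrow> ?rhs"
  proof -
    have "(cmod (f q))^2 = exp (2 * \<kappa> * (q$1 + Re (c (q$3))))" for q
      by (simp add: f_def wpar_def power2_eq_square flip: exp_add)
    moreover have "(cmod (e q))^2 = lam^2 * exp (2 * lam * q$1)" for q
      by (simp add: e_def wpar_def norm_mult power_mult_distrib mult.assoc flip: exp_of_nat_mult)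
    ultimately show ?thesis
      unfolding Im_cdet_levi_family using lam by (simp add: Let_def)
  qed
  finally show ?thesis .
qed

lemma open_Collect_vec_nth: "open S \<Longrightarrow> open {x::real^'n. x$i \<in> S}"
  using open_vimage[of S "\<lambda>x::real^'n. x$i"] by (simp add: vimage_def continuous_on_component)

lemma smooth_on_DERIV:
  assumes "smooth_on I f" "t \<in> I"
  shows "(f has_real_derivative deriv f t) (at t)"
    and "(deriv f has_real_derivative deriv (deriv f) t) (at t)"
proof -
  have "((deriv ^^ 0) f) differentiable (at t)" "((deriv ^^ 1) f) differentiable (at t)"
    using assms unfolding smooth_on_def by blast+
  then show "(f has_real_derivative deriv f t) (at t)"
    and "(deriv f has_real_derivative deriv (deriv f) t) (at t)"
    by (simp_all add: DERIV_deriv_iff_real_differentiable)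
qed

lemma deriv_eq_0_if_constant_on:
  fixes f :: "real \<Rightarrow> real"
  assumes "open I" "\<forall>r\<in>I. f r = c" "t \<in> I"
  shows "deriv f t = 0"
proof -
  have "(f has_real_derivative 0) (at t)"
    by (rule has_field_derivative_transform_within_open[OF DERIV_const assms(1,3)]) (use assms(2) in auto)
  then show ?thesis by (rule DERIV_imp_deriv)
qed

lemma quadratic_eq_0_on_infinite_set:
  fixes A B C :: "'a::idom"
  assumes "infinite T" "\<And>t. t \<in> T \<Longrightarrow> A * t^2 + B * t + C = 0"
  shows "A = 0 \<and> B = 0 \<and> C = 0"
proof -
  have "T \<subseteq> {t. poly [:C, B, A:] t = 0}"
    using assms(2) by (auto simp: algebra_simps power2_eq_square)
  then have "infinite {t. poly [:C, B, A:] t = 0}"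
    using assms(1) finite_subset by blast
  then have "[:C, B, A:] = 0"
    using poly_roots_finite by blast
  then show ?thesis by simp
qed

lemma levi_family_equation_coeff_eq_0:
  fixes \<kappa> lam m k x\<^sub>0 :: real
  defines "P u \<equiv> exp (2 * \<kappa> * (u + x\<^sub>0))" and "Q u \<equiv> lam^2 * exp (2 * lam * u)"
  assumes lam: "lam \<noteq> 0" "lam \<noteq> \<kappa>"
    and H: "\<And>u. m * (lam * (P u)^2 - \<kappa> * (Q u)^2) + (P u + Q u)^2 * k = 0"
  shows "m = 0"
proof -
  have quad: "(m * lam + k) * t^2 + (2 * k) * t + (k - \<kappa> * m) = 0"
    if t_range: "t \<in> range (\<lambda>u. P u / Q u)" for t
  proof -
    obtain u where t: "t = P u / Q u" using t_range by blast
    have "Q u > 0" using lam(1) by (simp add: Q_def)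
    with H[of u] show ?thesis
      unfolding t by (simp add: field_simps power2_eq_square)
  qed
  have "P u / Q u = exp (2 * \<kappa> * x\<^sub>0) / lam^2 * exp (2 * (\<kappa> - lam) * u)" for u
    using lam(1) by (simp add: P_def Q_def field_simps flip: exp_add)
  then have "inj (\<lambda>u. P u / Q u)"
    using lam by (auto intro!: injI)
  then have "infinite (range (\<lambda>u. P u / Q u))"
    using finite_imageD infinite_UNIV_char_0 by blast
  then have "m * lam + k = 0 \<and> 2 * k = 0"
    using quadratic_eq_0_on_infinite_set[OF _ quad] by blast
  then have "m * lam = 0" by linarith
  then show "m = 0" using lam(1) by simp
qed

lemma minimal_levi_family_smooth_iff:
  fixes \<kappa> lam :: real and g :: "complex \<Rightarrow> complex" and x y :: "real \<Rightarrow> real"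
  assumes I: "open I" and sx: "smooth_on I x" and sy: "smooth_on I y"
    and imm: "\<forall>t\<in>I. deriv x t \<noteq> 0 \<or> deriv y t \<noteq> 0" and lam: "lam \<noteq> 0"
    and g: "\<And>\<zeta>. (g has_field_derivative exp (of_real \<kappa> * \<zeta>)) (at \<zeta>)"
  shows "minimal_hypersurface {p. p$3 \<in> I}
      (\<lambda>p. (g (wpar p + Complex (x (p$3)) (y (p$3))), exp (of_real lam * wpar p)))
    \<longleftrightarrow> (\<forall>r\<in>I. \<forall>u. let P = exp (2 * \<kappa> * (u + x r)); Q = lam^2 * exp (2 * lam * u) in
          (deriv x r^2 + deriv y r^2) * deriv y r * (lam * P^2 - \<kappa> * Q^2)
          + (P + Q)^2 * (deriv y r * deriv (deriv x) r - deriv x r * deriv (deriv y) r) = 0)"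
    (is "_ \<longleftrightarrow> (\<forall>r\<in>I. \<forall>u. ?\<Phi> u r)")
proof -
  let ?U = "{p::real^3. p$3 \<in> I}"
  have "minimal_hypersurface ?U (\<lambda>p. (g (wpar p + Complex (x (p$3)) (y (p$3))), exp (of_real lam * wpar p)))
    \<longleftrightarrow> (\<forall>q\<in>?U. ?\<Phi> (q$1) (q$3))"
  proof (subst minimal_levi_family_criterion[OF open_Collect_vec_nth[OF I] lam g])
    show "((\<lambda>r. Complex (x r) (y r)) has_vector_derivative Complex (deriv x (q$3)) (deriv y (q$3))) (at (q$3))"
      if "q \<in> ?U" for q
      using that by (simp add: has_vector_derivative_Complex smooth_on_DERIV(1)[OF sx] smooth_on_DERIV(1)[OF sy])
    show "((\<lambda>r. Complex (deriv x r) (deriv y r)) has_vector_derivative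
        Complex (deriv (deriv x) (q$3)) (deriv (deriv y) (q$3))) (at (q$3))" if "q \<in> ?U" for q
      using that by (simp add: has_vector_derivative_Complex smooth_on_DERIV(2)[OF sx] smooth_on_DERIV(2)[OF sy])
    show "Complex (deriv x (q$3)) (deriv y (q$3)) \<noteq> 0" if "q \<in> ?U" for q
      using that imm by (auto simp: complex_eq_iff)
  qed (simp add: Let_def cmod_power2 algebra_simps)
  also have "\<dots> \<longleftrightarrow> (\<forall>r\<in>I. \<forall>u. ?\<Phi> u r)"
  proof
    assume H: "\<forall>q\<in>?U. ?\<Phi> (q$1) (q$3)"
    show "\<forall>r\<in>I. \<forall>u. ?\<Phi> u r"
    proof (intro ballI allI)
      fix r u assume "r \<in> I"
      then have "(vector [u, 0, r] :: real^3) \<in> ?U" by simp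
      from H[rule_format, OF this] show "?\<Phi> u r" by simp
    qed
  qed simp
  finally show ?thesis .
qed

lemma minimal_levi_family_iff:
  fixes \<kappa> lam :: real and g :: "complex \<Rightarrow> complex" and x y :: "real \<Rightarrow> real"
  assumes I: "open I" "connected I" and sx: "smooth_on I x" and sy: "smooth_on I y"
    and imm: "\<forall>t\<in>I. deriv x t \<noteq> 0 \<or> deriv y t \<noteq> 0" and lam: "lam \<noteq> 0" "lam \<noteq> \<kappa>"
    and g: "\<And>\<zeta>. (g has_field_derivative exp (of_real \<kappa> * \<zeta>)) (at \<zeta>)"
  shows "minimal_hypersurface {p. p$3 \<in> I}
      (\<lambda>p. (g (wpar p + Complex (x (p$3)) (y (p$3))), exp (of_real lam * wpar p)))
    \<longleftrightarrow> (\<exists>c. \<forall>r\<in>I. y r = c)"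
proof -
  have "(\<forall>r\<in>I. \<forall>u. (deriv x r^2 + deriv y r^2) * deriv y r *
        (lam * (exp (2 * \<kappa> * (u + x r)))^2 - \<kappa> * (lam^2 * exp (2 * lam * u))^2)
      + (exp (2 * \<kappa> * (u + x r)) + lam^2 * exp (2 * lam * u))^2 *
        (deriv y r * deriv (deriv x) r - deriv x r * deriv (deriv y) r) = 0)
    \<longleftrightarrow> (\<exists>c. \<forall>r\<in>I. y r = c)" (is "?equation \<longleftrightarrow> _")
  proof
    assume H: ?equation
    have "deriv y r = 0" if r: "r \<in> I" for r
    proof (rule ccontr)
      assume ny: "deriv y r \<noteq> 0"
      have "(deriv x r^2 + deriv y r^2) * deriv y r = 0"
        by (rule levi_family_equation_coeff_eq_0[OF lam]) (use H r in blast)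
      moreover have "deriv x r^2 + deriv y r^2 > 0" using ny by (simp add: add_nonneg_pos)
      ultimately show False using ny by simp
    qed
    then show "\<exists>c. \<forall>r\<in>I. y r = c"
      using DERIV_zero_connected_constant[OF I(2,1) finite.emptyI, of y]
        smooth_on_DERIV(1)[OF sy] DERIV_isCont continuous_at_imp_continuous_on
      by (metis Diff_empty)
  next
    assume "\<exists>c. \<forall>r\<in>I. y r = c"
    then obtain c where "\<forall>r\<in>I. y r = c" by blast
    then have y': "\<forall>r\<in>I. deriv y r = 0"
      using deriv_eq_0_if_constant_on[OF I(1)] by blast
    then have "\<forall>r\<in>I. deriv (deriv y) r = 0"
      using deriv_eq_0_if_constant_on[OF I(1)] by blast
    with y' show ?equation by simp
  qed
  then show ?thesis
    unfolding minimal_levi_family_smooth_iff[OF I(1) sx sy imm lam(1) g] Let_def .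
qed

section \<open>The hypersurface Im (z2 exp(-z1)) = 0\<close>

lemma hyp_c_has_derivative:
  fixes q :: "real^3"
  defines "z \<equiv> exp (wpar q)"
  shows "(hyp_c has_derivative levi_diff (1, of_real (q$3) * z) (0, z)) (at q)"
    and "((\<lambda>q. (1, of_real (q$3) * exp (wpar q))) has_derivative levi_diff (0, of_real (q$3) * z) (0, z)) (at q)"
    and "((\<lambda>q. (0, exp (wpar q))) has_derivative levi_diff (0, z) (0, 0)) (at q)"
proof -
  have dz: "((\<lambda>q. exp (wpar q)) has_derivative (\<lambda>h. z * wpar h)) (at q)"
    unfolding z_def by (rule has_derivative_compose_field[OF has_derivative_wpar DERIV_exp])
  have dr: "((\<lambda>q. of_real (q$3) :: complex) has_derivative (\<lambda>h. of_real (h$3))) (at q)"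
    by (intro has_derivative_of_real bounded_linear_imp_has_derivative bounded_linear_vec_nth)
  have dF: "((\<lambda>q. of_real (q$3) * exp (wpar q)) has_derivative (\<lambda>h. of_real (q$3) * (z * wpar h) + of_real (h$3) * z)) (at q)"
    using has_derivative_mult[OF dr dz] by (simp add: z_def)
  show "(hyp_c has_derivative levi_diff (1, of_real (q$3) * z) (0, z)) (at q)"
    unfolding hyp_c_def
    by (rule has_derivative_eq_rhs[OF has_derivative_Pair[OF has_derivative_wpar dF]])
      (simp add: levi_diff_def fun_eq_iff cscale_def scaleR_conv_of_real algebra_simps)
  show "((\<lambda>q. (1, of_real (q$3) * exp (wpar q))) has_derivative levi_diff (0, of_real (q$3) * z) (0, z)) (at q)"
    by (rule has_derivative_eq_rhs[OF has_derivative_Pair[OF has_derivative_const dF]])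
      (simp add: levi_diff_def fun_eq_iff cscale_def scaleR_conv_of_real algebra_simps)
  show "((\<lambda>q. (0, exp (wpar q))) has_derivative levi_diff (0, z) (0, 0)) (at q)"
    by (rule has_derivative_eq_rhs[OF has_derivative_Pair[OF has_derivative_const dz]])
      (simp add: levi_diff_def fun_eq_iff cscale_def scaleR_conv_of_real algebra_simps)
qed

lemma Im_cdet_hyp_c:
  fixes r :: real and z :: complex
  shows "Im (cdet (1, of_real r * z) (0, z) * cnj (cdet (1, of_real r * z)
    (levi_laplacian (1, of_real r * z) (0, z) (0, of_real r * z) (0, z) (0, 0)))) = 0"
  by (simp add: levi_laplacian_def herm_def cdet_def cscale_def scaleR_conv_of_real)
    (simp add: algebra_simps)

lemma hyp_c_minimal: "minimal_hypersurface UNIV hyp_c"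
  using minimal_hypersurface_levi_iff[OF open_UNIV hyp_c_has_derivative] Im_cdet_hyp_c
  by (simp add: cdet_def)

lemma hyp_c_immersion: "immersion3 UNIV hyp_c"
  unfolding immersion3_def
  by (auto intro!: immersion_levi[OF hyp_c_has_derivative(1)] simp: cdet_def)

definition hyp_c_inv :: "complex \<times> complex \<Rightarrow> real^3" where
  "hyp_c_inv z = Re (fst z) *\<^sub>R axis 1 1 + Im (fst z) *\<^sub>R axis 2 1 + Re (snd z * exp (- fst z)) *\<^sub>R axis 3 1"

lemma hyp_c_mult_exp: "snd (hyp_c p) * exp (- fst (hyp_c p)) = of_real (p$3)"
  by (simp add: hyp_c_def mult.assoc flip: exp_add)

lemma hyp_c_inv_hyp_c: "hyp_c_inv (hyp_c p) = p"
  using arg_cong[OF hyp_c_mult_exp[of p], of Re]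
  by (simp add: hyp_c_inv_def vec_eq_iff forall_3 axis_def) (simp add: hyp_c_def wpar_def)

lemma hyp_c_hyp_c_inv:
  assumes "Im (snd z * exp (- fst z)) = 0"
  shows "hyp_c (hyp_c_inv z) = z"
proof -
  have "wpar (hyp_c_inv z) = fst z"
    by (simp add: hyp_c_inv_def wpar_def axis_def complex_eq_iff)
  moreover have "of_real (Re (snd z * exp (- fst z))) = snd z * exp (- fst z)"
    using assms by (simp add: complex_eq_iff)
  ultimately show ?thesis
    by (simp add: hyp_c_def hyp_c_inv_def axis_def mult.assoc prod_eq_iff flip: exp_add)
qed

lemma homeomorphism_hyp_c:
  "homeomorphism UNIV {z. Im (snd z * exp (- fst z)) = 0} hyp_c hyp_c_inv"
proof
  show "continuous_on UNIV hyp_c"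
    using hyp_c_has_derivative(1) has_derivative_continuous continuous_at_imp_continuous_on by blast
  show "continuous_on {z. Im (snd z * exp (- fst z)) = 0} hyp_c_inv"
    unfolding hyp_c_inv_def by (intro continuous_intros)
  show "hyp_c ` UNIV \<subseteq> {z. Im (snd z * exp (- fst z)) = 0}"
    unfolding image_subset_iff mem_Collect_eq hyp_c_mult_exp by simp
qed (auto simp: hyp_c_inv_hyp_c hyp_c_hyp_c_inv)

theorem mainTheorem8:
  fixes I :: "real set" and x y :: "real \<Rightarrow> real"
  assumes "open I" and "connected I" and "I \<noteq> {}"
    and "smooth_on I x" and "smooth_on I y"
    and "\<forall>t\<in>I. deriv x t \<noteq> 0 \<or> deriv y t \<noteq> 0"
  shows "(\<forall>lam::real. lam \<noteq> 0 \<and> lam \<noteq> 1 \<longrightarrow>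
            (minimal_hypersurface {p. p$3 \<in> I} (hyp_a lam x y) \<longleftrightarrow> (\<exists>c. \<forall>r\<in>I. y r = c)))
       \<and> (\<forall>lam::real. lam \<noteq> 0 \<longrightarrow>
            (minimal_hypersurface {p. p$3 \<in> I} (hyp_b lam x y) \<longleftrightarrow> (\<exists>c. \<forall>r\<in>I. y r = c)))
       \<and> (let S = {z :: complex \<times> complex. Im (snd z * exp (- fst z)) = 0} in
            closed S \<and> range hyp_c = S \<and> (\<exists>G. homeomorphism UNIV S hyp_c G)
            \<and> immersion3 UNIV hyp_c \<and> minimal_hypersurface UNIV hyp_c)"
proof (intro conjI allI impI)
  fix lam :: real assume "lam \<noteq> 0 \<and> lam \<noteq> 1"
  moreover have "(exp has_field_derivative exp (of_real 1 * \<zeta>)) (at \<zeta>)" for \<zeta> :: complex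
    by (simp add: DERIV_exp)
  ultimately show "minimal_hypersurface {p. p$3 \<in> I} (hyp_a lam x y) \<longleftrightarrow> (\<exists>c. \<forall>r\<in>I. y r = c)"
    using minimal_levi_family_iff[OF assms(1,2,4,5,6), of lam 1 exp]
    by (simp add: hyp_a_def[abs_def])
next
  fix lam :: real assume "lam \<noteq> 0"
  moreover have "((\<lambda>\<zeta>. \<zeta>) has_field_derivative exp (of_real 0 * \<zeta>)) (at \<zeta>)" for \<zeta> :: complex
    by simp
  ultimately show "minimal_hypersurface {p. p$3 \<in> I} (hyp_b lam x y) \<longleftrightarrow> (\<exists>c. \<forall>r\<in>I. y r = c)"
    using minimal_levi_family_iff[OF assms(1,2,4,5,6), of lam 0 "\<lambda>\<zeta>. \<zeta>"]
    by (simp add: hyp_b_def[abs_def])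
next
  have "closed {z :: complex \<times> complex. Im (snd z * exp (- fst z)) = 0}"
    by (intro closed_Collect_eq continuous_intros)
  then show "let S = {z :: complex \<times> complex. Im (snd z * exp (- fst z)) = 0} in
      closed S \<and> range hyp_c = S \<and> (\<exists>G. homeomorphism UNIV S hyp_c G)
      \<and> immersion3 UNIV hyp_c \<and> minimal_hypersurface UNIV hyp_c"
    using homeomorphism_hyp_c homeomorphism_image1[OF homeomorphism_hyp_c]
      hyp_c_immersion hyp_c_minimal
    by (auto simp: Let_def)
qed

end
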